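(* Let $\mathbb{H}_1,\mathbb{H}_2$ be complex Hilbert spaces. Let $T\in \mathbb{L}(\mathbb{H}_1,\mathbb{H}_2)$ with $\|T\|=1$ be such that $\operatorname{dist}(T,\mathbb{K}(\mathbb{H}_1,\mathbb{H}_2))<1$. Then for $A\in \mathbb{L}(\mathbb{H}_1,\mathbb{H}_2)$, $T\perp_B A$ if and only if there exists $x\in M_T$ such that $\langle Ax,Tx\rangle=0$.
   Context: $\mathbb{L}(\mathbb{H}_1,\mathbb{H}_2)$ ($\mathbb{K}(\mathbb{H}_1,\mathbb{H}_2)$) is the space of bounded (compact) linear operators with the operator norm. $M_T=\{x\in\mathbb{H}_1:\|x\|=1,\ \|Tx\|=\|T\|\}$. Birkhoff–James orthogonality: $T\perp_B A$ means $\|T+\lambda A\|\geq \|T\|$ for every complex scalar $\lambda$. *)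

theory Defs
  imports "HOL-Analysis.Analysis"
begin

text \<open>Complex inner product spaces (the library only has real ones).\<close>
class complex_inner = real_normed_vector +
  fixes scaleC :: "complex \<Rightarrow> 'a \<Rightarrow> 'a"
    and cinner :: "'a \<Rightarrow> 'a \<Rightarrow> complex"
  assumes scaleC_add_right: "scaleC a (x + y) = scaleC a x + scaleC a y"
    and scaleC_add_left: "scaleC (a + b) x = scaleC a x + scaleC b x"
    and scaleC_scaleC: "scaleC a (scaleC b x) = scaleC (a * b) x"
    and scaleC_one: "scaleC 1 x = x"
    and scaleC_of_real: "scaleC (complex_of_real r) x = scaleR r x"
    and cinner_commute: "cinner x y = cnj (cinner y x)"
    and cinner_add_left: "cinner (x + y) z = cinner x z + cinner y z"
    and cinner_scaleC_left: "cinner (scaleC a x) y = a * cinner x y"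
    and cinner_self_norm: "cinner x x = complex_of_real ((norm x)\<^sup>2)"

class chilbert = complex_inner + complete_space

definition cbounded_linear :: "('a::complex_inner \<Rightarrow> 'b::complex_inner) \<Rightarrow> bool" where
  "cbounded_linear T \<longleftrightarrow>
     (\<forall>x y. T (x + y) = T x + T y) \<and>
     (\<forall>c x. T (scaleC c x) = scaleC c (T x)) \<and>
     (\<exists>K. \<forall>x. norm (T x) \<le> norm x * K)"

definition compact_operator :: "('a::complex_inner \<Rightarrow> 'b::complex_inner) \<Rightarrow> bool" where
  "compact_operator T \<longleftrightarrow> cbounded_linear T \<and> compact (closure (T ` cball 0 1))"

definition dist_compacts :: "('a::complex_inner \<Rightarrow> 'b::complex_inner) \<Rightarrow> real" where
  "dist_compacts T = Inf ((\<lambda>K. onorm (\<lambda>x. T x - K x)) ` {K. compact_operator K})"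

definition norm_attain_set :: "('a::complex_inner \<Rightarrow> 'b::complex_inner) \<Rightarrow> 'a set" where
  "norm_attain_set T = {x. norm x = 1 \<and> norm (T x) = onorm T}"

definition BJ_orth :: "('a::complex_inner \<Rightarrow> 'b::complex_inner) \<Rightarrow> ('a \<Rightarrow> 'b) \<Rightarrow> bool" where
  "BJ_orth T A \<longleftrightarrow> (\<forall>l::complex. onorm (\<lambda>x. T x + scaleC l (A x)) \<ge> onorm T)"

end

theory Submission
  imports Defs
begin

text \<open>
  Let \<open>W = {\<langle>A x, T x\<rangle> | x \<in> M\<^sub>T}\<close>. As \<open>\<parallel>T\<parallel> = 1\<close>, the vectors on which \<open>T\<close> is isometric form a
  subspace on which \<open>T\<close> preserves inner products; \<open>M\<^sub>T\<close> is its unit sphere, so \<open>W\<close> is convex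
  by the Toeplitz--Hausdorff argument. A compact \<open>K\<close> with \<open>\<parallel>T - K\<parallel> < 1\<close> forces every norming
  sequence of unit vectors to have a subsequence converging into \<open>M\<^sub>T\<close>, so \<open>M\<^sub>T\<close> is compact and
  \<open>W\<close> is closed. If \<open>T \<perp>\<^sub>B A\<close>, then \<open>\<parallel>T + t \<omega> A\<parallel> \<ge> 1\<close> for small \<open>t > 0\<close> yields almost norming
  unit vectors \<open>x\<close> with \<open>Re (\<omega> \<langle>A x, T x\<rangle>)\<close> almost nonnegative, and compactness moves such
  an \<open>x\<close> into \<open>M\<^sub>T\<close>. Thus \<open>W\<close> meets every closed half-plane bounded by a line through \<open>0\<close>, and
  a separating hyperplane argument gives \<open>0 \<in> W\<close>. Conversely, \<open>\<langle>A x, T x\<rangle> = 0\<close> for some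
  \<open>x \<in> M\<^sub>T\<close> gives \<open>\<parallel>T x + \<lambda> A x\<parallel>\<^sup>2 = 1 + \<bar>\<lambda>\<bar>\<^sup>2 \<parallel>A x\<parallel>\<^sup>2 \<ge> 1\<close>.
\<close>

section \<open>Complex inner products and bounded complex-linear operators\<close>

lemma cinner_zero_left [simp]: "cinner 0 y = 0"
  using cinner_add_left [of 0 0 y] by simp

lemma cinner_minus_left [simp]: "cinner (- x) y = - cinner x y"
  using cinner_add_left [of x "- x" y] by (simp add: add_eq_0_iff)

lemma cinner_add_right: "cinner x (y + z) = cinner x y + cinner x z"
  by (subst (1 2 3) cinner_commute) (simp add: cinner_add_left)

lemma cinner_zero_right [simp]: "cinner x 0 = 0"
  by (subst cinner_commute) simp

lemma cinner_minus_right [simp]: "cinner x (- y) = - cinner x y"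
  by (subst (1 2) cinner_commute) simp

lemma cinner_scaleC_right: "cinner x (scaleC a y) = cnj a * cinner x y"
  by (subst (1 2) cinner_commute) (simp add: cinner_scaleC_left)

lemma cinner_scaleR_left: "cinner (r *\<^sub>R x) y = complex_of_real r * cinner x y"
  by (simp add: scaleC_of_real [symmetric] cinner_scaleC_left)

lemma cinner_scaleR_right: "cinner x (r *\<^sub>R y) = complex_of_real r * cinner x y"
  by (simp add: scaleC_of_real [symmetric] cinner_scaleC_right)

lemma scaleC_zero_right [simp]: "scaleC a 0 = 0"
  using scaleC_add_right [of a 0 0] by simp

lemma scaleC_scaleR_commute: "scaleC a (r *\<^sub>R x) = r *\<^sub>R scaleC a x"
  by (simp add: scaleC_of_real [symmetric] scaleC_scaleC mult.commute)

lemma power2_norm_add: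
  "(norm (x + y))\<^sup>2 = (norm x)\<^sup>2 + (norm y)\<^sup>2 + 2 * Re (cinner x y)"
proof -
  have "Re (cinner (x + y) (x + y)) =
      Re (cinner x x) + Re (cinner y y) + Re (cinner x y) + Re (cinner y x)"
    by (simp add: cinner_add_left cinner_add_right)
  moreover have "Re (cinner y x) = Re (cinner x y)"
    by (subst cinner_commute) simp
  ultimately show ?thesis
    by (simp add: cinner_self_norm)
qed

lemma power2_norm_diff:
  "(norm (x - y))\<^sup>2 = (norm x)\<^sup>2 + (norm y)\<^sup>2 - 2 * Re (cinner x y)"
  using power2_norm_add [of x "- y"] by simp

lemma norm_scaleC: "norm (scaleC a x) = cmod a * norm x"
proof -
  have "complex_of_real ((norm (scaleC a x))\<^sup>2) = a * cnj a * complex_of_real ((norm x)\<^sup>2)"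
    unfolding cinner_self_norm [symmetric] by (simp add: cinner_scaleC_left cinner_scaleC_right)
  also have "a * cnj a = complex_of_real ((cmod a)\<^sup>2)"
    by (simp only: complex_norm_square)
  finally have "(norm (scaleC a x))\<^sup>2 = (cmod a * norm x)\<^sup>2"
    by (metis of_real_eq_iff of_real_mult power_mult_distrib)
  then show ?thesis
    by (simp add: power2_eq_iff_nonneg)
qed

lemma cinner_Cauchy_Schwarz: "cmod (cinner x y) \<le> norm x * norm y"
proof (cases "y = 0")
  case True
  then show ?thesis by simp
next
  case False
  then have ny: "norm y > 0" by simp
  define c where "c = cinner x y / complex_of_real ((norm y)\<^sup>2)"
  have "0 \<le> (norm (x - scaleC c y))\<^sup>2" by simp
  also have "\<dots> = (norm x)\<^sup>2 + (cmod c)\<^sup>2 * (norm y)\<^sup>2 - 2 * Re (cnj c * cinner x y)"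
    by (simp add: power2_norm_diff norm_scaleC cinner_scaleC_right power_mult_distrib)
  also have "cnj c * cinner x y = complex_of_real ((cmod (cinner x y))\<^sup>2 / (norm y)\<^sup>2)"
    unfolding c_def using ny by (simp add: complex_norm_square mult.commute del: of_real_power)
  also have "(cmod c)\<^sup>2 * (norm y)\<^sup>2 = (cmod (cinner x y))\<^sup>2 / (norm y)\<^sup>2"
    unfolding c_def using ny by (simp add: norm_divide power_divide norm_mult power2_eq_square)
  finally have "(cmod (cinner x y))\<^sup>2 \<le> (norm x * norm y)\<^sup>2"
    using ny by (simp add: divide_le_eq power_mult_distrib)
  then show ?thesis
    by (meson norm_ge_zero power2_le_imp_le mult_nonneg_nonneg)
qed

lemma bounded_bilinear_cinner: "bounded_bilinear (cinner :: 'a::complex_inner \<Rightarrow> 'a \<Rightarrow> complex)"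
proof
  fix a a' b :: 'a and r :: real
  show "cinner (a + a') b = cinner a b + cinner a' b" by (rule cinner_add_left)
  show "cinner b (a + a') = cinner b a + cinner b a'" by (rule cinner_add_right)
  show "cinner (r *\<^sub>R a) b = r *\<^sub>R cinner a b"
    by (simp add: cinner_scaleR_left scaleR_conv_of_real)
  show "cinner a (r *\<^sub>R b) = r *\<^sub>R cinner a b"
    by (simp add: cinner_scaleR_right scaleR_conv_of_real)
  show "\<exists>K. \<forall>a b::'a. norm (cinner a b) \<le> norm a * norm b * K"
    by (rule exI [where x = 1]) (simp add: cinner_Cauchy_Schwarz)
qed

lemma cbounded_linear_id: "cbounded_linear (\<lambda>x. x)"
  unfolding cbounded_linear_def by (auto intro: exI [where x = 1])

lemma cbounded_linear_add: "cbounded_linear T \<Longrightarrow> T (x + y) = T x + T y"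
  unfolding cbounded_linear_def by blast

lemma cbounded_linear_scaleC: "cbounded_linear T \<Longrightarrow> T (scaleC c x) = scaleC c (T x)"
  unfolding cbounded_linear_def by blast

lemma cbounded_linear_scaleR: "cbounded_linear T \<Longrightarrow> T (r *\<^sub>R x) = r *\<^sub>R T x"
  using cbounded_linear_scaleC [of T "complex_of_real r" x] by (simp add: scaleC_of_real)

lemma cbounded_linear_minus: "cbounded_linear T \<Longrightarrow> T (- x) = - T x"
  using cbounded_linear_scaleR [of T "- 1" x] by simp

lemma cbounded_linear_imp_bounded_linear:
  assumes "cbounded_linear T"
  shows "bounded_linear T"
proof -
  obtain K where "\<And>x. norm (T x) \<le> norm x * K"
    using assms unfolding cbounded_linear_def by blast
  then show ?thesis
    by (intro bounded_linear_intro [where K = K])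
      (simp_all add: cbounded_linear_add [OF assms] cbounded_linear_scaleR [OF assms])
qed

lemma cbounded_linear_norm_le:
  assumes "cbounded_linear T" "onorm T \<le> 1"
  shows "norm (T x) \<le> norm x"
proof -
  have "norm (T x) \<le> onorm T * norm x"
    using onorm [OF cbounded_linear_imp_bounded_linear [OF assms(1)]] .
  also have "\<dots> \<le> 1 * norm x"
    using assms(2) by (intro mult_right_mono) simp_all
  finally show ?thesis
    by simp
qed

lemma bounded_linear_add_scaleC:
  fixes T A :: "'a::complex_inner \<Rightarrow> 'b::complex_inner"
  assumes "cbounded_linear T" "cbounded_linear A"
  shows "bounded_linear (\<lambda>x. T x + scaleC l (A x))"
proof -
  have "bounded_linear (\<lambda>y::'b. scaleC l y)"
    by (rule bounded_linear_intro [where K = "cmod l"])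
      (auto simp: scaleC_add_right scaleC_scaleR_commute norm_scaleC mult.commute)
  then have "bounded_linear (\<lambda>x. scaleC l (A x))"
    using bounded_linear_compose [OF _ cbounded_linear_imp_bounded_linear [OF assms(2)]] by blast
  then show ?thesis
    using bounded_linear_add [OF cbounded_linear_imp_bounded_linear [OF assms(1)]] by blast
qed

lemma continuous_on_cinner_form:
  assumes "cbounded_linear A" "cbounded_linear T"
  shows "continuous_on S (\<lambda>x. cinner (A x) (T x))"
proof -
  have "continuous_on S A" "continuous_on S T"
    using assms by (auto intro: linear_continuous_on cbounded_linear_imp_bounded_linear)
  then show ?thesis
    by (rule bounded_bilinear.continuous_on [OF bounded_bilinear_cinner])
qed

section \<open>Vectors on which a contraction is isometric\<close>

text \<open>Replacing \<open>x\<close> by \<open>x + t d y\<close>, where \<open>d = \<langle>T x, T y\<rangle> - \<langle>x, y\<rangle>\<close>, changes the nonnegative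
  quantity \<open>\<parallel>x\<parallel>\<^sup>2 - \<parallel>T x\<parallel>\<^sup>2 = 0\<close> by \<open>-2t\<bar>d\<bar>\<^sup>2 + O(t\<^sup>2)\<close>, which forces \<open>d = 0\<close>.\<close>
lemma contraction_cinner_eq_if_norm_eq:
  fixes T :: "'a::complex_inner \<Rightarrow> 'b::complex_inner"
  assumes T: "cbounded_linear T" and contr: "\<And>z. norm (T z) \<le> norm z"
    and x: "norm (T x) = norm x"
  shows "cinner (T x) (T y) = cinner x y"
proof -
  define d where "d = cinner (T x) (T y) - cinner x y"
  define t where "t = 1 / ((norm y)\<^sup>2 + 1)"
  have t: "t > 0" "t * (norm y)\<^sup>2 < 1"
    unfolding t_def by (auto simp: field_simps add_pos_nonneg)
  define c where "c = complex_of_real t * d"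
  have "(norm (T (x + scaleC c y)))\<^sup>2 \<le> (norm (x + scaleC c y))\<^sup>2"
    using contr by (simp add: power_mono)
  then have "(norm (T x))\<^sup>2 + (cmod c * norm (T y))\<^sup>2 + 2 * Re (cnj c * cinner (T x) (T y))
      \<le> (norm x)\<^sup>2 + (cmod c * norm y)\<^sup>2 + 2 * Re (cnj c * cinner x y)"
    by (simp add: cbounded_linear_add [OF T] cbounded_linear_scaleC [OF T] power2_norm_add
        norm_scaleC cinner_scaleC_right)
  then have "2 * Re (cnj c * d) \<le> (cmod c)\<^sup>2 * (norm y)\<^sup>2 - (cmod c)\<^sup>2 * (norm (T y))\<^sup>2"
    using x by (simp add: d_def algebra_simps power_mult_distrib)
  then have "2 * Re (cnj c * d) \<le> (cmod c)\<^sup>2 * (norm y)\<^sup>2"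
    by (smt (verit) zero_le_mult_iff zero_le_power2)
  moreover have "Re (cnj c * d) = t * (cmod d)\<^sup>2"
    unfolding c_def cmod_power2 by (simp add: power2_eq_square algebra_simps)
  moreover have "(cmod c)\<^sup>2 = t\<^sup>2 * (cmod d)\<^sup>2"
    unfolding c_def using t by (simp add: norm_mult power_mult_distrib)
  ultimately have "t * (2 * (cmod d)\<^sup>2) \<le> t * ((t * (norm y)\<^sup>2) * (cmod d)\<^sup>2)"
    by (simp add: power2_eq_square algebra_simps)
  then have "2 * (cmod d)\<^sup>2 \<le> (t * (norm y)\<^sup>2) * (cmod d)\<^sup>2"
    using t by simp
  also have "\<dots> \<le> 1 * (cmod d)\<^sup>2"
    using t by (intro mult_right_mono) auto
  finally show ?thesis
    by (simp add: d_def)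
qed

definition csubspace :: "'a::complex_inner set \<Rightarrow> bool" where
  "csubspace N \<longleftrightarrow> (\<forall>x\<in>N. \<forall>y\<in>N. x + y \<in> N) \<and> (\<forall>c. \<forall>x\<in>N. scaleC c x \<in> N)"

lemma csubspace_add: "csubspace N \<Longrightarrow> x \<in> N \<Longrightarrow> y \<in> N \<Longrightarrow> x + y \<in> N"
  unfolding csubspace_def by blast

lemma csubspace_scaleC: "csubspace N \<Longrightarrow> x \<in> N \<Longrightarrow> scaleC c x \<in> N"
  unfolding csubspace_def by blast

lemma csubspace_scaleR: "csubspace N \<Longrightarrow> x \<in> N \<Longrightarrow> r *\<^sub>R x \<in> N"
  using csubspace_scaleC [of N x "complex_of_real r"] by (simp add: scaleC_of_real)

lemma csubspace_norm_preserved: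
  fixes T :: "'a::complex_inner \<Rightarrow> 'b::complex_inner"
  assumes T: "cbounded_linear T" and contr: "\<And>z. norm (T z) \<le> norm z"
  shows "csubspace {x. norm (T x) = norm x}"
  unfolding csubspace_def
proof (intro conjI ballI allI)
  fix x y assume "x \<in> {x. norm (T x) = norm x}" "y \<in> {x. norm (T x) = norm x}"
  then have x: "norm (T x) = norm x" and y: "norm (T y) = norm y" by auto
  have "(norm (T (x + y)))\<^sup>2 = (norm (x + y))\<^sup>2"
    using contraction_cinner_eq_if_norm_eq [OF T contr x, of y] x y
    by (simp add: cbounded_linear_add [OF T] power2_norm_add)
  then show "x + y \<in> {x. norm (T x) = norm x}"
    by (simp add: power2_eq_iff_nonneg)
next
  fix c x assume "x \<in> {x. norm (T x) = norm x}"
  then show "scaleC c x \<in> {x. norm (T x) = norm x}"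
    by (simp add: cbounded_linear_scaleC [OF T] norm_scaleC)
qed

section \<open>The Toeplitz--Hausdorff theorem\<close>

lemma exists_unimodular_real_combination:
  fixes P Q d :: complex
  assumes "d \<noteq> 0"
  obtains \<omega> c where "cmod \<omega> = 1" "cnj \<omega> * P + \<omega> * Q = d * complex_of_real c"
proof -
  define R where "R = Q / d - cnj (P / d)"
  define \<omega> where "\<omega> = cis (- Arg R)"
  have \<omega>R: "\<omega> * R = complex_of_real (cmod R)"
    by (subst (2) rcis_cmod_Arg [symmetric]) (simp add: \<omega>_def rcis_def cis_mult)
  have "Im (cnj \<omega> * P / d) = - Im (\<omega> * cnj (P / d))"
    using cnj.sel(2) [of "\<omega> * cnj (P / d)"] by simp
  then have "Im ((cnj \<omega> * P + \<omega> * Q) / d) = Im (\<omega> * R)"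
    by (simp add: R_def add_divide_distrib right_diff_distrib)
  then have "(cnj \<omega> * P + \<omega> * Q) / d = complex_of_real (Re ((cnj \<omega> * P + \<omega> * Q) / d))"
    unfolding \<omega>R by (simp add: complex_eq_iff)
  then show ?thesis
    using that [of \<omega>] assms by (simp add: \<omega>_def field_simps)
qed

lemma cinner_form_add_scaleR:
  assumes A: "cbounded_linear A" and T: "cbounded_linear T"
  shows "cinner (A (r *\<^sub>R u + t *\<^sub>R v)) (T (r *\<^sub>R u + t *\<^sub>R v)) =
    complex_of_real (r\<^sup>2) * cinner (A u) (T u)
    + complex_of_real (r * t) * (cinner (A u) (T v) + cinner (A v) (T u))
    + complex_of_real (t\<^sup>2) * cinner (A v) (T v)"
  by (simp add: cbounded_linear_add [OF A] cbounded_linear_add [OF T] cbounded_linear_scaleR [OF A]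
      cbounded_linear_scaleR [OF T] cinner_add_left cinner_add_right cinner_scaleR_left
      cinner_scaleR_right algebra_simps power2_eq_square)

lemma cinner_form_scaleR:
  assumes "cbounded_linear A" "cbounded_linear T"
  shows "cinner (A (r *\<^sub>R z)) (T (r *\<^sub>R z)) = complex_of_real (r\<^sup>2) * cinner (A z) (T z)"
  by (simp add: cbounded_linear_scaleR [OF assms(1)] cbounded_linear_scaleR [OF assms(2)]
      cinner_scaleR_left cinner_scaleR_right power2_eq_square)

lemma cinner_form_segment:
  fixes A T :: "'a::complex_inner \<Rightarrow> 'b::complex_inner"
  defines "q \<equiv> \<lambda>z. cinner (A z) (T z)"
  assumes A: "cbounded_linear A" and T: "cbounded_linear T" and x: "norm x = 1" and v: "norm v = 1"
    and c: "cinner (A x) (T v) + cinner (A v) (T x) - q x * (cinner x v + cinner v x)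
      = (q v - q x) * complex_of_real c"
  shows "q ((1 - s) *\<^sub>R x + s *\<^sub>R v) =
    q x * complex_of_real ((norm ((1 - s) *\<^sub>R x + s *\<^sub>R v))\<^sup>2)
    + (q v - q x) * complex_of_real ((1 - s) * s * c + s\<^sup>2)"
proof -
  define w where "w = (1 - s) *\<^sub>R x + s *\<^sub>R v"
  have qw: "q w = complex_of_real ((1 - s)\<^sup>2) * q x
      + complex_of_real ((1 - s) * s) * (cinner (A x) (T v) + cinner (A v) (T x))
      + complex_of_real (s\<^sup>2) * q v"
    unfolding q_def w_def by (rule cinner_form_add_scaleR [OF A T])
  have ww: "cinner w w = complex_of_real ((1 - s)\<^sup>2)
      + complex_of_real ((1 - s) * s) * (cinner x v + cinner v x) + complex_of_real (s\<^sup>2)"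
    using cinner_form_add_scaleR [OF cbounded_linear_id cbounded_linear_id, of "1 - s" x s v] x v
    by (simp add: w_def cinner_self_norm)
  have "q w - q x * cinner w w = complex_of_real ((1 - s) * s) *
      (cinner (A x) (T v) + cinner (A v) (T x) - q x * (cinner x v + cinner v x))
      + complex_of_real (s\<^sup>2) * (q v - q x)"
    unfolding qw ww by (simp add: algebra_simps)
  then show ?thesis
    unfolding c w_def [symmetric] cinner_self_norm by (simp add: algebra_simps)
qed

lemma cinner_form_eq_if_segment_zero:
  assumes A: "cbounded_linear A" and T: "cbounded_linear T"
    and x: "norm x = 1" and v: "norm v = 1" and zero: "(1 - s) *\<^sub>R x + s *\<^sub>R v = 0"
  shows "cinner (A x) (T x) = cinner (A v) (T v)"
proof -
  have xv: "(1 - s) *\<^sub>R x = - (s *\<^sub>R v)"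
    using zero by (simp add: eq_neg_iff_add_eq_0)
  then have "norm ((1 - s) *\<^sub>R x) = norm (s *\<^sub>R v)"
    by (metis norm_minus_cancel)
  then have s_half: "s = 1 / 2"
    using x v by (auto simp: abs_if split: if_splits)
  have "x = 2 *\<^sub>R ((1 - s) *\<^sub>R x)"
    unfolding s_half by simp
  also have "\<dots> = - v"
    by (simp only: xv) (simp add: s_half)
  finally show ?thesis
    by (simp add: cbounded_linear_minus [OF A] cbounded_linear_minus [OF T])
qed

text \<open>Hypothesis \<open>c\<close> makes \<open>(q z - q x \<parallel>z\<parallel>\<^sup>2) / (q v - q x)\<close> real on the segment from \<open>x\<close>
  to \<open>v\<close>, so the intermediate value theorem applies to its quotient by \<open>\<parallel>z\<parallel>\<^sup>2\<close>.\<close>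
lemma numerical_range_segment_real:
  fixes A T :: "'a::complex_inner \<Rightarrow> 'b::complex_inner"
  defines "q \<equiv> \<lambda>z. cinner (A z) (T z)"
  assumes A: "cbounded_linear A" and T: "cbounded_linear T" and N: "csubspace N"
    and x: "x \<in> N" "norm x = 1" and v: "v \<in> N" "norm v = 1" and xv: "q x \<noteq> q v"
    and c: "cinner (A x) (T v) + cinner (A v) (T x) - q x * (cinner x v + cinner v x)
      = (q v - q x) * complex_of_real c"
    and \<tau>: "0 \<le> \<tau>" "\<tau> \<le> 1"
  shows "\<exists>z\<in>N. norm z = 1 \<and> q z = q x + complex_of_real \<tau> * (q v - q x)"
proof -
  define w where "w s = (1 - s) *\<^sub>R x + s *\<^sub>R v" for s
  define f where "f s = (1 - s) * s * c + s\<^sup>2" for s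
  have q_w: "q (w s) = q x * complex_of_real ((norm (w s))\<^sup>2) + (q v - q x) * complex_of_real (f s)"
    for s
    using cinner_form_segment [OF A T x(2) v(2) c [unfolded q_def]] by (simp add: q_def w_def f_def)
  have w_nonzero: "w s \<noteq> 0" for s
    using cinner_form_eq_if_segment_zero [OF A T x(2) v(2)] xv by (auto simp: w_def q_def)
  have cont: "continuous_on {0..1} (\<lambda>s. f s / (norm (w s))\<^sup>2)"
    using w_nonzero unfolding f_def w_def by (intro continuous_intros) auto
  have f0: "f 0 / (norm (w 0))\<^sup>2 = 0" and f1: "f 1 / (norm (w 1))\<^sup>2 = 1"
    using v(2) by (simp_all add: f_def w_def)
  have "\<exists>s\<ge>0. s \<le> 1 \<and> f s / (norm (w s))\<^sup>2 = \<tau>"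
    by (rule IVT' [of "\<lambda>s. f s / (norm (w s))\<^sup>2", OF _ _ _ cont]) (simp_all only: f0 f1 \<tau> zero_le_one)
  then obtain s where s: "f s / (norm (w s))\<^sup>2 = \<tau>"
    by blast
  have nw: "norm (w s) > 0"
    using w_nonzero by simp
  define z where "z = (1 / norm (w s)) *\<^sub>R w s"
  have "z \<in> N" "norm z = 1"
    using N x v nw by (simp_all add: z_def w_def csubspace_scaleR csubspace_add)
  moreover have "q z = q x + complex_of_real \<tau> * (q v - q x)"
  proof -
    have "q z = complex_of_real (1 / (norm (w s))\<^sup>2) * q (w s)"
      unfolding z_def q_def cinner_form_scaleR [OF A T] by (simp add: power_divide)
    also have "\<dots> = q x + (q v - q x) * complex_of_real (f s / (norm (w s))\<^sup>2)"
      unfolding q_w using nw by (simp add: field_simps)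
    finally show ?thesis
      using s by (simp add: mult.commute)
  qed
  ultimately show ?thesis
    by blast
qed

text \<open>Rotating \<open>y\<close> by a suitable unimodular \<open>\<omega>\<close> makes the form real on the segment.\<close>
lemma numerical_range_segment:
  fixes A T :: "'a::complex_inner \<Rightarrow> 'b::complex_inner"
  defines "q \<equiv> \<lambda>z. cinner (A z) (T z)"
  assumes A: "cbounded_linear A" and T: "cbounded_linear T" and N: "csubspace N"
    and x: "x \<in> N" "norm x = 1" and y: "y \<in> N" "norm y = 1" and \<tau>: "0 \<le> \<tau>" "\<tau> \<le> 1"
  shows "\<exists>z\<in>N. norm z = 1 \<and> q z = q x + complex_of_real \<tau> * (q y - q x)"
proof (cases "q x = q y")
  case True
  with x show ?thesis by auto
next
  case False
  then obtain \<omega> c where \<omega>: "cmod \<omega> = 1" and c: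
    "cnj \<omega> * (cinner (A x) (T y) - q x * cinner x y) + \<omega> * (cinner (A y) (T x) - q x * cinner y x)
      = (q y - q x) * complex_of_real c"
    using exists_unimodular_real_combination [where d = "q y - q x"
        and P = "cinner (A x) (T y) - q x * cinner x y" and Q = "cinner (A y) (T x) - q x * cinner y x"]
    by auto
  have \<omega>\<omega>: "cnj \<omega> * \<omega> = 1"
    using \<omega> by (metis complex_norm_square mult.commute of_real_1 one_power2)
  define v where "v = scaleC \<omega> y"
  have v: "v \<in> N" "norm v = 1" "q v = q y"
    using N y \<omega> \<omega>\<omega> by (simp_all add: v_def csubspace_scaleC norm_scaleC q_def cbounded_linear_scaleC [OF A]
        cbounded_linear_scaleC [OF T] cinner_scaleC_left cinner_scaleC_right mult.assoc)
  have "cinner (A x) (T v) + cinner (A v) (T x) - q x * (cinner x v + cinner v x)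
      = (q v - q x) * complex_of_real c"
    unfolding v(3) c [symmetric]
    by (simp add: v_def cbounded_linear_scaleC [OF A] cbounded_linear_scaleC [OF T]
        cinner_scaleC_left cinner_scaleC_right algebra_simps)
  then show ?thesis
    using numerical_range_segment_real [OF A T N x v(1,2) _ _ \<tau>] False v(3)
    by (simp add: q_def)
qed

theorem Toeplitz_Hausdorff:
  fixes A T :: "'a::complex_inner \<Rightarrow> 'b::complex_inner"
  assumes A: "cbounded_linear A" and T: "cbounded_linear T" and N: "csubspace N"
  shows "convex ((\<lambda>z. cinner (A z) (T z)) ` {z\<in>N. norm z = 1})"
proof (rule convexI)
  fix p p' and u v :: real
  assume "p \<in> (\<lambda>z. cinner (A z) (T z)) ` {z\<in>N. norm z = 1}"
    and "p' \<in> (\<lambda>z. cinner (A z) (T z)) ` {z\<in>N. norm z = 1}"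
    and uv: "0 \<le> u" "0 \<le> v" "u + v = 1"
  then obtain x y where x: "x \<in> N" "norm x = 1" "p = cinner (A x) (T x)"
    and y: "y \<in> N" "norm y = 1" "p' = cinner (A y) (T y)"
    by auto
  obtain z where z: "z \<in> N" "norm z = 1"
    and qz: "cinner (A z) (T z) = p + complex_of_real v * (p' - p)"
    using numerical_range_segment [OF A T N x(1,2) y(1,2), of v] uv x(3) y(3) by auto
  have "u *\<^sub>R p + v *\<^sub>R p' = cinner (A z) (T z)"
    using uv unfolding qz by (simp add: scaleR_conv_of_real algebra_simps flip: of_real_add distrib_left)
  with z show "u *\<^sub>R p + v *\<^sub>R p' \<in> (\<lambda>z. cinner (A z) (T z)) ` {z\<in>N. norm z = 1}"
    by auto
qed

section \<open>Compactness of the norm attainment set\<close>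

lemma compact_operator_zero: "compact_operator (\<lambda>x::'a::complex_inner. 0::'b::complex_inner)"
proof -
  have "(\<lambda>x::'a. 0::'b) ` cball 0 1 = {0}"
    by (auto intro!: image_eqI [where x = 0])
  then show ?thesis
    unfolding compact_operator_def cbounded_linear_def by (auto intro: exI [where x = 0])
qed

lemma dist_compacts_lessE:
  fixes T :: "'a::complex_inner \<Rightarrow> 'b::complex_inner"
  assumes "dist_compacts T < r"
  obtains K where "compact_operator K" "onorm (\<lambda>x. T x - K x) < r"
proof -
  have "(\<lambda>K. onorm (\<lambda>x. T x - K x)) ` {K. compact_operator K} \<noteq> {}"
    using compact_operator_zero by blast
  then show ?thesis
    using cInf_lessD [OF _ assms [unfolded dist_compacts_def]] that by blast
qed

text \<open>Parallelogram law for \<open>a \<pm> b\<close>, with \<open>T (a - b)\<close> controlled through the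
  compact perturbation \<open>K\<close> of \<open>T\<close> and \<open>T (a + b)\<close> by contractivity.\<close>
lemma parallelogram_defect_bound:
  fixes T K :: "'a::complex_inner \<Rightarrow> 'b::complex_inner"
  assumes T: "cbounded_linear T" and K: "cbounded_linear K"
    and contr: "\<And>z. norm (T z) \<le> norm z"
    and TK: "\<And>z. norm (T z - K z) \<le> s * norm z" and s: "0 \<le> s" "s < 1"
    and a: "norm a = 1" and b: "norm b = 1"
  shows "(1 - s\<^sup>2) * (norm (a - b))\<^sup>2 \<le> (2 - 2 * (norm (T a))\<^sup>2) + (2 - 2 * (norm (T b))\<^sup>2)
           + 4 * norm (K a - K b) + (norm (K a - K b))\<^sup>2"
proof -
  define D where "D = norm (K a - K b)"
  have T_diff: "T (a - b) = T a - T b" and K_diff: "K (a - b) = K a - K b"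
    using cbounded_linear_add [OF T, of a "- b"] cbounded_linear_add [OF K, of a "- b"]
    by (simp_all add: cbounded_linear_minus [OF T] cbounded_linear_minus [OF K])
  have "norm (a - b) \<le> 2"
    using norm_triangle_ineq4 [of a b] a b by simp
  then have "s * norm (a - b) \<le> 2"
    using s by (smt (verit) mult_left_le_one_le norm_ge_zero)
  have "norm (T (a - b)) \<le> norm (T (a - b) - K (a - b)) + norm (K (a - b))"
    using norm_triangle_ineq [of "T (a - b) - K (a - b)" "K (a - b)"] by simp
  also have "\<dots> \<le> s * norm (a - b) + D"
    using TK [of "a - b"] K_diff D_def by simp
  finally have "(norm (T (a - b)))\<^sup>2 \<le> (s * norm (a - b) + D)\<^sup>2"
    by (simp add: power_mono)
  also have "\<dots> = s\<^sup>2 * (norm (a - b))\<^sup>2 + 2 * (s * norm (a - b)) * D + D\<^sup>2"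
    by (simp add: power2_eq_square algebra_simps)
  also have "\<dots> \<le> s\<^sup>2 * (norm (a - b))\<^sup>2 + 4 * D + D\<^sup>2"
    using mult_right_mono [OF \<open>s * norm (a - b) \<le> 2\<close>, of D] by (simp add: D_def)
  finally have minus: "(norm (T a - T b))\<^sup>2 \<le> s\<^sup>2 * (norm (a - b))\<^sup>2 + 4 * D + D\<^sup>2"
    unfolding T_diff .
  have plus: "(norm (T a + T b))\<^sup>2 \<le> (norm (a + b))\<^sup>2"
    using contr [of "a + b"] by (simp add: cbounded_linear_add [OF T] power_mono)
  show ?thesis
    using minus plus a b unfolding D_def [symmetric]
    by (simp add: power2_norm_add power2_norm_diff algebra_simps)
qed

lemma norming_pair_bound:
  fixes T K :: "'a::complex_inner \<Rightarrow> 'b::complex_inner" and l :: 'b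
  defines "\<delta> \<equiv> \<lambda>z. (2 - 2 * (norm (T z))\<^sup>2) + norm (K z - l)"
  assumes T: "cbounded_linear T" and K: "cbounded_linear K"
    and contr: "\<And>z. norm (T z) \<le> norm z"
    and TK: "\<And>z. norm (T z - K z) \<le> s * norm z" and s: "0 \<le> s" "s < 1"
    and a: "norm a = 1" and b: "norm b = 1" and small: "\<delta> a + \<delta> b \<le> 1"
  shows "(1 - s\<^sup>2) * (norm (a - b))\<^sup>2 \<le> 6 * \<delta> a + 6 * \<delta> b"
proof -
  define D where "D = norm (K a - K b)"
  have \<delta>_ge: "2 - 2 * (norm (T z))\<^sup>2 \<le> \<delta> z" "norm (K z - l) \<le> \<delta> z" if "norm z = 1" for z
    using contr [of z] that by (simp_all add: \<delta>_def power_le_one)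
  have "D \<le> norm (K a - l) + norm (K b - l)"
    unfolding D_def using norm_triangle_ineq4 [of "K a - l" "K b - l"] by simp
  then have D: "0 \<le> D" "D \<le> \<delta> a + \<delta> b"
    using \<delta>_ge(2) [OF a] \<delta>_ge(2) [OF b] by (simp_all add: D_def)
  then have "D\<^sup>2 \<le> \<delta> a + \<delta> b"
    using small by (smt (verit) mult_left_le power2_eq_square)
  moreover have "(1 - s\<^sup>2) * (norm (a - b))\<^sup>2 \<le> (2 - 2 * (norm (T a))\<^sup>2)
      + (2 - 2 * (norm (T b))\<^sup>2) + 4 * D + D\<^sup>2"
    unfolding D_def by (rule parallelogram_defect_bound [OF T K contr TK s a b])
  ultimately show ?thesis
    using D \<delta>_ge(1) [OF a] \<delta>_ge(1) [OF b] by linarith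
qed

lemma Cauchy_if_norming_and_image_convergent:
  fixes T K :: "'a::complex_inner \<Rightarrow> 'b::complex_inner"
  assumes T: "cbounded_linear T" and K: "cbounded_linear K"
    and contr: "\<And>z. norm (T z) \<le> norm z"
    and TK: "\<And>z. norm (T z - K z) \<le> s * norm z" and s: "0 \<le> s" "s < 1"
    and y: "\<And>n. norm (y n) = 1" and Ty: "(\<lambda>n. norm (T (y n))) \<longlonglongrightarrow> 1"
    and Ky: "(\<lambda>n. K (y n)) \<longlonglongrightarrow> l"
  shows "Cauchy y"
proof (rule metric_CauchyI)
  fix e :: real
  assume e: "0 < e"
  define \<delta> where "\<delta> z = (2 - 2 * (norm (T z))\<^sup>2) + norm (K z - l)" for z
  have "(\<lambda>n. \<delta> (y n)) \<longlonglongrightarrow> (2 - 2 * 1\<^sup>2) + 0"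
    unfolding \<delta>_def by (intro tendsto_intros Ty tendsto_norm_zero LIM_zero Ky)
  moreover have s2: "0 < 1 - s\<^sup>2"
    using s by (simp add: power_less_one_iff abs_square_less_1)
  define \<eta> where "\<eta> = min (1 / 2) ((1 - s\<^sup>2) * e\<^sup>2 / 12)"
  have "0 < \<eta>"
    using e s2 by (simp add: \<eta>_def)
  ultimately obtain M where M: "\<And>n. M \<le> n \<Longrightarrow> \<delta> (y n) < \<eta>"
    using order_tendstoD(2) by (fastforce simp: eventually_sequentially)
  show "\<exists>M. \<forall>m\<ge>M. \<forall>n\<ge>M. dist (y m) (y n) < e"
  proof (intro exI allI impI)
    fix m n assume "M \<le> m" "M \<le> n"
    moreover have "2 * \<eta> \<le> 1" "12 * \<eta> \<le> (1 - s\<^sup>2) * e\<^sup>2"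
      by (simp_all add: \<eta>_def)
    ultimately have small: "\<delta> (y m) + \<delta> (y n) \<le> 1" "6 * \<delta> (y m) + 6 * \<delta> (y n) < (1 - s\<^sup>2) * e\<^sup>2"
      using M [of m] M [of n] by linarith+
    then have "(1 - s\<^sup>2) * (norm (y m - y n))\<^sup>2 \<le> 6 * \<delta> (y m) + 6 * \<delta> (y n)"
      using small(1) unfolding \<delta>_def by (intro norming_pair_bound [OF T K contr TK s y y])
    also have "\<dots> < (1 - s\<^sup>2) * e\<^sup>2"
      by (rule small(2))
    finally have "(norm (y m - y n))\<^sup>2 < e\<^sup>2"
      using s2 by simp
    then show "dist (y m) (y n) < e"
      using e by (simp add: dist_norm power_less_imp_less_base)
  qed
qed

lemma norming_limit_in_norm_attain_set:
  assumes T: "cbounded_linear T" and x: "\<And>n. norm (x n) = 1"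
    and Tx: "(\<lambda>n. norm (T (x n))) \<longlonglongrightarrow> onorm T" and xy: "x \<longlonglongrightarrow> y"
  shows "y \<in> norm_attain_set T"
proof -
  have "(\<lambda>n. norm (x n)) \<longlonglongrightarrow> norm y"
    by (rule tendsto_norm [OF xy])
  then have "norm y = 1"
    by (simp add: x LIMSEQ_const_iff)
  moreover have "(\<lambda>n. norm (T (x n))) \<longlonglongrightarrow> norm (T y)"
    by (intro tendsto_norm bounded_linear.tendsto [OF cbounded_linear_imp_bounded_linear [OF T] xy])
  then have "norm (T y) = onorm T"
    using Tx LIMSEQ_unique by metis
  ultimately show ?thesis
    by (simp add: norm_attain_set_def)
qed

text \<open>This is where \<open>dist(T, K(H\<^sub>1, H\<^sub>2)) < 1\<close> enters: a compact \<open>K\<close> with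
  \<open>\<parallel>T - K\<parallel> < 1\<close> turns a convergent subsequence of \<open>K x\<^sub>n\<close> into a Cauchy subsequence of \<open>x\<^sub>n\<close>.\<close>
lemma norming_sequence_convergent_subseq:
  fixes T :: "'a::chilbert \<Rightarrow> 'b::chilbert" and x :: "nat \<Rightarrow> 'a"
  assumes T: "cbounded_linear T" and T_norm: "onorm T = 1" and dist_T: "dist_compacts T < 1"
    and x: "\<And>n. norm (x n) = 1" and Tx: "(\<lambda>n. norm (T (x n))) \<longlonglongrightarrow> 1"
  obtains r y where "strict_mono r" "(x \<circ> r) \<longlonglongrightarrow> y" "y \<in> norm_attain_set T"
proof -
  obtain K where K_compact: "compact_operator K" and TK_norm: "onorm (\<lambda>x. T x - K x) < 1"
    using dist_compacts_lessE [OF dist_T] .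
  have K: "cbounded_linear K"
    using K_compact by (simp add: compact_operator_def)
  have TK_linear: "bounded_linear (\<lambda>x. T x - K x)"
    using T K by (intro bounded_linear_sub cbounded_linear_imp_bounded_linear)
  have "seq_compact (closure (K ` cball 0 1))"
    using K_compact by (simp add: compact_operator_def compact_imp_seq_compact)
  moreover have "\<forall>n. K (x n) \<in> closure (K ` cball 0 1)"
    using x by (intro allI closure_subset [THEN subsetD]) simp
  ultimately obtain l r where r: "strict_mono r" and "((\<lambda>n. K (x n)) \<circ> r) \<longlonglongrightarrow> l"
    by (rule seq_compactE)
  then have Kxr: "(\<lambda>n. K ((x \<circ> r) n)) \<longlonglongrightarrow> l"
    by (simp add: o_def)
  have Txr: "(\<lambda>n. norm (T ((x \<circ> r) n))) \<longlonglongrightarrow> 1"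
    using LIMSEQ_subseq_LIMSEQ [OF Tx r] by (simp add: o_def)
  have "Cauchy (x \<circ> r)"
    using Cauchy_if_norming_and_image_convergent [OF T K cbounded_linear_norm_le [OF T] onorm [OF TK_linear]
        onorm_pos_le [OF TK_linear] TK_norm _ Txr Kxr] T_norm x
    by (simp add: comp_def)
  then obtain y where xy: "(x \<circ> r) \<longlonglongrightarrow> y"
    using Cauchy_convergent_iff convergent_def by blast
  have "y \<in> norm_attain_set T"
    using norming_limit_in_norm_attain_set [OF T _ _ xy] x Txr T_norm by simp
  with r xy show ?thesis
    using that by blast
qed

lemma compact_norm_attain_set:
  fixes T :: "'a::chilbert \<Rightarrow> 'b::chilbert"
  assumes T: "cbounded_linear T" and T_norm: "onorm T = 1" and dist_T: "dist_compacts T < 1"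
  shows "compact (norm_attain_set T)"
  unfolding compact_eq_seq_compact_metric seq_compact_def
proof (intro allI impI)
  fix x :: "nat \<Rightarrow> 'a"
  assume "\<forall>n. x n \<in> norm_attain_set T"
  then have "\<And>n. norm (x n) = 1" "(\<lambda>n. norm (T (x n))) \<longlonglongrightarrow> 1"
    by (simp_all add: norm_attain_set_def T_norm)
  then obtain r y where "strict_mono r" "(x \<circ> r) \<longlonglongrightarrow> y" "y \<in> norm_attain_set T"
    by (rule norming_sequence_convergent_subseq [OF T T_norm dist_T])
  then show "\<exists>y\<in>norm_attain_set T. \<exists>r. strict_mono r \<and> (x \<circ> r) \<longlonglongrightarrow> y"
    by blast
qed

section \<open>Birkhoff--James orthogonality\<close>

lemma less_onorm_imp_unit_vector:
  fixes f :: "'a::real_normed_vector \<Rightarrow> 'b::real_normed_vector"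
  assumes f: "bounded_linear f" and c: "0 \<le> c" "c < onorm f"
  obtains x where "norm x = 1" "c < norm (f x)"
proof -
  have "bdd_above (range (\<lambda>x. norm (f x) / norm x))"
    using le_onorm [OF f] by (intro bdd_aboveI2) auto
  moreover have "c < (SUP x. norm (f x) / norm x)"
    using c by (simp add: onorm_def)
  ultimately obtain x where x: "c < norm (f x) / norm x"
    using less_cSUP_iff by blast
  then have "x \<noteq> 0"
    using c by auto
  have "f ((1 / norm x) *\<^sub>R x) = (1 / norm x) *\<^sub>R f x"
    using f by (simp add: linear_simps)
  then show ?thesis
    using that [of "(1 / norm x) *\<^sub>R x"] x \<open>x \<noteq> 0\<close> by simp
qed

lemma norm_perturbation_gt_imp:
  fixes u w :: "'a::complex_inner"
  assumes \<omega>: "cmod \<omega> = 1" and t: "0 \<le> t" "t \<le> 1"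
    and big: "1 - t\<^sup>2 < norm (u + scaleC (complex_of_real t * \<omega>) w)"
  shows "1 - 2 * t\<^sup>2 < (norm u)\<^sup>2 + t\<^sup>2 * (norm w)\<^sup>2 + 2 * (t * Re (\<omega> * cinner w u))"
proof -
  have "Re (cinner u (scaleC (complex_of_real t * \<omega>) w)) = t * Re (\<omega> * cinner w u)"
    by (subst cinner_commute) (simp add: cinner_scaleC_left mult.assoc)
  then have "(norm (u + scaleC (complex_of_real t * \<omega>) w))\<^sup>2
      = (norm u)\<^sup>2 + t\<^sup>2 * (norm w)\<^sup>2 + 2 * (t * Re (\<omega> * cinner w u))"
    using t \<omega> by (simp add: power2_norm_add norm_scaleC norm_mult power_mult_distrib)
  moreover have "(1 - t\<^sup>2)\<^sup>2 < (norm (u + scaleC (complex_of_real t * \<omega>) w))\<^sup>2"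
    using big t by (simp add: power_strict_mono power_le_one)
  moreover have "1 - 2 * t\<^sup>2 \<le> (1 - t\<^sup>2)\<^sup>2"
    by (simp add: power2_diff)
  ultimately show ?thesis
    by linarith
qed

lemma perturbed_norm_bounds:
  fixes u w :: "'a::complex_inner" and \<alpha> :: real
  defines "C \<equiv> 1 + (1 + \<alpha>)\<^sup>2"
  assumes u: "norm u \<le> 1" and w: "norm w \<le> \<alpha>" and \<omega>: "cmod \<omega> = 1" and t: "0 < t" "t \<le> 1"
    and big: "1 - t\<^sup>2 < norm (u + scaleC (complex_of_real t * \<omega>) w)"
  shows "- (t * C) \<le> Re (\<omega> * cinner w u)"
    and "1 - t * C \<le> norm u"
proof -
  define \<rho> where "\<rho> = Re (\<omega> * cinner w u)"
  have "\<rho> \<le> cmod (\<omega> * cinner w u)"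
    unfolding \<rho>_def by (rule complex_Re_le_cmod)
  also have "\<dots> \<le> norm w * norm u"
    using \<omega> cinner_Cauchy_Schwarz [of w u] by (simp add: norm_mult)
  also have "\<dots> \<le> \<alpha>"
    using u w by (smt (verit) mult_left_le norm_ge_zero)
  finally have \<rho>\<alpha>: "\<rho> \<le> \<alpha>" .
  have main: "1 - 2 * t\<^sup>2 < (norm u)\<^sup>2 + t\<^sup>2 * (norm w)\<^sup>2 + 2 * (t * \<rho>)"
    using norm_perturbation_gt_imp [OF \<omega> _ t(2) big] t by (simp add: \<rho>_def)
  have "t\<^sup>2 \<le> t"
    using t by (simp add: power2_eq_square mult_left_le)
  have "0 \<le> \<alpha>"
    using w norm_ge_zero order_trans by blast
  have w_sq: "(norm w)\<^sup>2 \<le> \<alpha>\<^sup>2"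
    using w by (simp add: power_mono)
  have u_sq: "(norm u)\<^sup>2 \<le> norm u"
    using u by (simp add: power2_eq_square mult_left_le)
  have "t * (- (t * C)) \<le> t * \<rho>"
  proof -
    have "t\<^sup>2 * (norm w)\<^sup>2 \<le> t\<^sup>2 * \<alpha>\<^sup>2"
      using w_sq by (simp add: mult_left_mono)
    moreover have "t * (- (t * C)) = - (2 * t\<^sup>2 + 2 * (t\<^sup>2 * \<alpha>) + t\<^sup>2 * \<alpha>\<^sup>2)"
      by (simp add: C_def power2_eq_square algebra_simps)
    moreover have "0 \<le> t\<^sup>2" "0 \<le> t\<^sup>2 * \<alpha>" "0 \<le> t\<^sup>2 * \<alpha>\<^sup>2"
      using \<open>0 \<le> \<alpha>\<close> by simp_all
    ultimately show ?thesis
      using main u u_sq by linarith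
  qed
  then show "- (t * C) \<le> Re (\<omega> * cinner w u)"
    using mult_left_le_imp_le [OF _ t(1)] by (simp add: \<rho>_def)
  have "t\<^sup>2 * (norm w)\<^sup>2 \<le> t * \<alpha>\<^sup>2"
    using w_sq \<open>t\<^sup>2 \<le> t\<close> by (meson mult_mono zero_le_power2 less_imp_le t(1))
  moreover have "t * \<rho> \<le> t * \<alpha>"
    using \<rho>\<alpha> t by simp
  moreover have "t * C = 2 * t + 2 * (t * \<alpha>) + t * \<alpha>\<^sup>2"
    by (simp add: C_def power2_eq_square algebra_simps)
  ultimately show "1 - t * C \<le> norm u"
    using main u_sq \<open>t\<^sup>2 \<le> t\<close> by linarith
qed

lemma BJ_orth_imp_almost_orthogonal:
  fixes T A :: "'a::complex_inner \<Rightarrow> 'b::complex_inner"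
  assumes T: "cbounded_linear T" and A: "cbounded_linear A" and T_norm: "onorm T = 1"
    and BJ: "BJ_orth T A" and \<omega>: "cmod \<omega> = 1" and e: "0 < e"
  shows "\<exists>x. norm x = 1 \<and> 1 - e \<le> norm (T x) \<and> - e \<le> Re (\<omega> * cinner (A x) (T x))"
proof -
  define C where "C = 1 + (1 + onorm A)\<^sup>2"
  have "1 \<le> C"
    by (simp add: C_def)
  define t where "t = min 1 (e / C)"
  have t: "0 < t" "t \<le> 1" "t * C \<le> e"
    using e \<open>1 \<le> C\<close> by (auto simp: t_def min_def field_simps)
  have "1 - t\<^sup>2 < 1"
    using t by simp
  also have "1 \<le> onorm (\<lambda>x. T x + scaleC (complex_of_real t * \<omega>) (A x))"
    using BJ T_norm unfolding BJ_orth_def by metis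
  finally obtain x where x: "norm x = 1"
    and big: "1 - t\<^sup>2 < norm (T x + scaleC (complex_of_real t * \<omega>) (A x))"
    using less_onorm_imp_unit_vector [OF bounded_linear_add_scaleC [OF T A]] t
    by (metis diff_ge_0_iff_ge power_le_one less_imp_le)
  have "norm (T x) \<le> 1" "norm (A x) \<le> onorm A"
    using cbounded_linear_norm_le [OF T, of x] onorm [OF cbounded_linear_imp_bounded_linear [OF A], of x]
      T_norm x by simp_all
  then have "- (t * C) \<le> Re (\<omega> * cinner (A x) (T x))" "1 - t * C \<le> norm (T x)"
    using perturbed_norm_bounds [OF _ _ \<omega> t(1,2) big] by (simp_all add: C_def)
  with x t show ?thesis
    by (intro exI [where x = x]) auto
qed

lemma BJ_orth_imp_rotated_nonneg:
  fixes T A :: "'a::chilbert \<Rightarrow> 'b::chilbert"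
  assumes T: "cbounded_linear T" and T_norm: "onorm T = 1" and dist_T: "dist_compacts T < 1"
    and A: "cbounded_linear A" and BJ: "BJ_orth T A" and \<omega>: "cmod \<omega> = 1"
  shows "\<exists>x\<in>norm_attain_set T. 0 \<le> Re (\<omega> * cinner (A x) (T x))"
proof -
  define e :: "nat \<Rightarrow> real" where "e n = inverse (real (Suc n))" for n
  have "\<forall>n. \<exists>x. norm x = 1 \<and> 1 - e n \<le> norm (T x) \<and> - e n \<le> Re (\<omega> * cinner (A x) (T x))"
    using BJ_orth_imp_almost_orthogonal [OF T A T_norm BJ \<omega>] by (simp add: e_def)
  then obtain x where x: "\<And>n. norm (x n) = 1" and Tx: "\<And>n. 1 - e n \<le> norm (T (x n))"
    and Ax: "\<And>n. - e n \<le> Re (\<omega> * cinner (A (x n)) (T (x n)))"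
    by metis
  have e: "e \<longlonglongrightarrow> 0"
    unfolding e_def by (rule LIMSEQ_inverse_real_of_nat)
  have "(\<lambda>n. norm (T (x n))) \<longlonglongrightarrow> 1"
  proof (rule tendsto_sandwich [OF _ _ _ tendsto_const])
    show "\<forall>\<^sub>F n in sequentially. 1 - e n \<le> norm (T (x n))"
      using Tx by simp
    show "\<forall>\<^sub>F n in sequentially. norm (T (x n)) \<le> 1"
      using cbounded_linear_norm_le [OF T, of "x _"] T_norm x by (simp add: always_eventually)
    show "(\<lambda>n. 1 - e n) \<longlonglongrightarrow> 1"
      using tendsto_diff [OF tendsto_const e, of 1] by simp
  qed
  then obtain r y where r: "strict_mono r" and xy: "(x \<circ> r) \<longlonglongrightarrow> y"
    and y: "y \<in> norm_attain_set T"
    by (rule norming_sequence_convergent_subseq [OF T T_norm dist_T x])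
  have "(\<lambda>n. - e (r n)) \<longlonglongrightarrow> - 0"
    using tendsto_minus [OF LIMSEQ_subseq_LIMSEQ [OF e r]] by (simp add: o_def)
  moreover have "(\<lambda>n. Re (\<omega> * cinner (A ((x \<circ> r) n)) (T ((x \<circ> r) n)))) \<longlonglongrightarrow>
      Re (\<omega> * cinner (A y) (T y))"
    by (intro tendsto_intros
        continuous_on_tendsto_compose [OF continuous_on_cinner_form [OF A T, where S = UNIV] xy])
      simp_all
  ultimately have "- 0 \<le> Re (\<omega> * cinner (A y) (T y))"
    by (rule LIMSEQ_le) (use Ax in auto)
  with y show ?thesis
    by auto
qed

lemma zero_in_closed_convex_if_rotations_nonneg:
  fixes S :: "complex set"
  assumes "closed S" "convex S" and rot: "\<And>\<omega>. cmod \<omega> = 1 \<Longrightarrow> \<exists>z\<in>S. 0 \<le> Re (\<omega> * z)"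
  shows "0 \<in> S"
proof (rule ccontr)
  assume "0 \<notin> S"
  then obtain a b where a: "a \<noteq> 0" and b: "0 < b" and sep: "\<forall>z\<in>S. b < inner a z"
    using separating_hyperplane_closed_0 assms(1,2) by blast
  define \<omega> where "\<omega> = - cnj a / complex_of_real (cmod a)"
  have "cmod \<omega> = 1"
    using a by (simp add: \<omega>_def norm_divide)
  then obtain z where z: "z \<in> S" "0 \<le> Re (\<omega> * z)"
    using rot by blast
  have "Re (\<omega> * z) = - inner a z / cmod a"
    using a by (simp add: \<omega>_def inner_complex_def field_simps)
  moreover have "inner a z / cmod a > 0"
    using sep z(1) b a by (auto intro: divide_pos_pos)
  ultimately show False
    using z by linarith
qed

lemma BJ_orth_if_cinner_zero:
  fixes T A :: "'a::complex_inner \<Rightarrow> 'b::complex_inner"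
  assumes T: "cbounded_linear T" and A: "cbounded_linear A"
    and x: "x \<in> norm_attain_set T" and orth: "cinner (A x) (T x) = 0"
  shows "BJ_orth T A"
  unfolding BJ_orth_def
proof
  fix l :: complex
  have "cinner (T x) (scaleC l (A x)) = 0"
    using orth by (subst cinner_commute) (simp add: cinner_scaleC_left)
  then have "(norm (T x))\<^sup>2 \<le> (norm (T x + scaleC l (A x)))\<^sup>2"
    by (simp add: power2_norm_add)
  then have "norm (T x) \<le> norm (T x + scaleC l (A x))"
    using power2_le_imp_le by simp
  also have "\<dots> \<le> onorm (\<lambda>x. T x + scaleC l (A x))"
    using onorm [OF bounded_linear_add_scaleC [OF T A], of x] x by (simp add: norm_attain_set_def)
  finally show "onorm T \<le> onorm (\<lambda>x. T x + scaleC l (A x))"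
    using x by (simp add: norm_attain_set_def)
qed

lemma convex_norm_attained_values:
  fixes T A :: "'a::complex_inner \<Rightarrow> 'b::complex_inner"
  assumes T: "cbounded_linear T" and T_norm: "onorm T = 1" and A: "cbounded_linear A"
  shows "convex ((\<lambda>x. cinner (A x) (T x)) ` norm_attain_set T)"
proof -
  have "norm_attain_set T = {z \<in> {z. norm (T z) = norm z}. norm z = 1}"
    by (auto simp: norm_attain_set_def T_norm)
  then show ?thesis
    using Toeplitz_Hausdorff [OF A T csubspace_norm_preserved [OF T cbounded_linear_norm_le [OF T]]]
      T_norm by simp
qed

lemma closed_norm_attained_values:
  fixes T A :: "'a::chilbert \<Rightarrow> 'b::chilbert"
  assumes T: "cbounded_linear T" and T_norm: "onorm T = 1" and dist_T: "dist_compacts T < 1"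
    and A: "cbounded_linear A"
  shows "closed ((\<lambda>x. cinner (A x) (T x)) ` norm_attain_set T)"
  using compact_continuous_image [OF continuous_on_cinner_form [OF A T]
      compact_norm_attain_set [OF T T_norm dist_T]]
  by (rule compact_imp_closed)

theorem theorem2p3:
  fixes T A :: "'a::chilbert \<Rightarrow> 'b::chilbert"
  assumes "cbounded_linear T"
    and "onorm T = 1"
    and "dist_compacts T < 1"
    and "cbounded_linear A"
  shows "BJ_orth T A \<longleftrightarrow> (\<exists>x\<in>norm_attain_set T. cinner (A x) (T x) = 0)"
proof
  assume BJ: "BJ_orth T A"
  have "0 \<in> (\<lambda>x. cinner (A x) (T x)) ` norm_attain_set T"
    using closed_norm_attained_values [OF assms] convex_norm_attained_values [OF assms(1,2,4)]
    by (rule zero_in_closed_convex_if_rotations_nonneg)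
      (use BJ_orth_imp_rotated_nonneg [OF assms BJ] in blast)
  then show "\<exists>x\<in>norm_attain_set T. cinner (A x) (T x) = 0"
    by force
next
  assume "\<exists>x\<in>norm_attain_set T. cinner (A x) (T x) = 0"
  then show "BJ_orth T A"
    using BJ_orth_if_cinner_zero [OF assms(1,4)] by blast
qed

end
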